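(* Let $K=\operatorname{cone}\{e_1,\dots,e_m\}\subset\mathbb{R}^m$ be a simplicial cone. Then there exists $\varepsilon\in\mathcal{E}$ such that $K_\varepsilon$ is subdual if and only if there exists an index set $I\subset\{1,\dots,m\}$, with complement $I^c=\{1,\dots,m\}\setminus I$, such that $\langle e_i,e_j\rangle\ge0$ for all $i,j\in I$, $\langle e_k,e_\ell\rangle\ge0$ for all $k,\ell\in I^c$, and $\langle e_i,e_k\rangle\le0$ for all $i\in I$, $k\in I^c$.
   Context: $\mathbb{R}^m$ carries the standard inner product. A simplicial cone is $\operatorname{cone}\{e_1,\dots,e_m\}=\{\sum t^ie_i:t^i\ge0\}$ with $e_1,\dots,e_m$ linearly independent. $\mathcal{E}=\{\varepsilon\in\mathbb{R}^m:|\varepsilon^i|=1,\ i=1,\dots,m\}$ and $K_\varepsilon=\operatorname{cone}\{\varepsilon^1e_1,\dots,\varepsilon^me_m\}$. A cone $K$ is subdual if $K\subset K^*$, where $K^*=\{y:\langle x,y\rangle\ge0\ \forall x\in K\}$. *)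

theory Defs
  imports "HOL-Analysis.Analysis"
begin

definition gen_cone :: "('m::finite \<Rightarrow> real^'n) \<Rightarrow> (real^'n) set" where
  "gen_cone e = {(\<Sum>i\<in>UNIV. t i *\<^sub>R e i) | t. \<forall>i. t i \<ge> 0}"

definition dual_cone :: "(real^'n) set \<Rightarrow> (real^'n) set" where
  "dual_cone K = {y. \<forall>x\<in>K. inner x y \<ge> 0}"

definition subdual :: "(real^'n) set \<Rightarrow> bool" where
  "subdual K \<longleftrightarrow> K \<subseteq> dual_cone K"

definition sign_vectors :: "('m \<Rightarrow> real) set" where
  "sign_vectors = {\<epsilon>. \<forall>i. \<bar>\<epsilon> i\<bar> = 1}"

end

theory Submission
  imports Defs
begin

text \<open>A generated cone is subdual exactly when its generators have pairwise nonnegative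
  inner products, so K_eps is subdual iff eps_i eps_j <e_i, e_j> >= 0 for all i, j.
  A sign vector is the same thing as the set I = {i. eps_i = 1}, and the sign of
  eps_i eps_j records whether i and j lie on the same side of I.\<close>

lemma generator_in_gen_cone: "f i \<in> gen_cone (f :: 'm::finite \<Rightarrow> real^'n)"
proof -
  have "(\<Sum>k\<in>UNIV. (if k = i then 1 else 0) *\<^sub>R f k) = f i"
    by (subst sum.mono_neutral_right[of UNIV "{i}"]) auto
  then show ?thesis unfolding gen_cone_def
    by (intro CollectI exI[of _ "\<lambda>k. if k = i then 1 else 0"]) auto
qed

lemma subdual_gen_cone_iff:
  "subdual (gen_cone (f :: 'm::finite \<Rightarrow> real^'n)) \<longleftrightarrow> (\<forall>i j. inner (f i) (f j) \<ge> 0)"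
proof
  assume "subdual (gen_cone f)"
  then show "\<forall>i j. inner (f i) (f j) \<ge> 0"
    using generator_in_gen_cone[of f] unfolding subdual_def dual_cone_def by blast
next
  assume nonneg: "\<forall>i j. inner (f i) (f j) \<ge> 0"
  show "subdual (gen_cone f)"
    unfolding subdual_def dual_cone_def gen_cone_def
  proof clarify
    fix s t :: "'m \<Rightarrow> real"
    assume "\<forall>i. s i \<ge> 0" and "\<forall>i. t i \<ge> 0"
    have "inner (\<Sum>i\<in>UNIV. t i *\<^sub>R f i) (\<Sum>j\<in>UNIV. s j *\<^sub>R f j)
       = (\<Sum>i\<in>UNIV. \<Sum>j\<in>UNIV. t i * s j * inner (f i) (f j))"
      by (simp add: inner_sum_left inner_sum_right sum_distrib_left mult_ac inner_commute)
    also have "\<dots> \<ge> 0"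
      using nonneg \<open>\<forall>i. s i \<ge> 0\<close> \<open>\<forall>i. t i \<ge> 0\<close> by (intro sum_nonneg) simp
    finally show "0 \<le> inner (\<Sum>i\<in>UNIV. t i *\<^sub>R f i) (\<Sum>j\<in>UNIV. s j *\<^sub>R f j)" .
  qed
qed

lemma subdual_signed_gen_cone_iff:
  "subdual (gen_cone (\<lambda>i. \<epsilon> i *\<^sub>R f i)) \<longleftrightarrow>
     (\<forall>i j. \<epsilon> i * \<epsilon> j * inner (f i) (f (j::'m::finite)) \<ge> 0)"
  for f :: "'m::finite \<Rightarrow> real^'n"
  unfolding subdual_gen_cone_iff by (simp add: algebra_simps)

lemma sign_vectors_iff_indicator:
  "\<epsilon> \<in> sign_vectors \<longleftrightarrow> \<epsilon> = (\<lambda>i. if i \<in> {i. \<epsilon> i = 1} then 1 else -1)"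
  unfolding sign_vectors_def fun_eq_iff by (auto simp: abs_if split: if_splits)

lemma sign_pattern_nonneg_iff:
  fixes g :: "'a \<Rightarrow> 'a \<Rightarrow> real"
  assumes "\<And>i j. g i j = g j i"
  shows "(\<forall>i j. (if i \<in> I then 1 else -1) * (if j \<in> I then 1 else -1) * g i j \<ge> (0::real))
     \<longleftrightarrow> (\<forall>i\<in>I. \<forall>j\<in>I. g i j \<ge> 0) \<and> (\<forall>k\<in>-I. \<forall>l\<in>-I. g k l \<ge> 0) \<and>
         (\<forall>i\<in>I. \<forall>k\<in>-I. g i k \<le> 0)" (is "?L \<longleftrightarrow> ?R")
proof
  assume ?L
  show ?R
  proof (intro conjI ballI)
    fix i j assume "i \<in> I" "j \<in> I"
    then show "g i j \<ge> 0" using \<open>?L\<close> by (metis mult_1)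
  next
    fix k l assume "k \<in> -I" "l \<in> -I"
    then show "g k l \<ge> 0" using \<open>?L\<close>[rule_format, of k l] by simp
  next
    fix i k assume "i \<in> I" "k \<in> -I"
    then show "g i k \<le> 0" using \<open>?L\<close>[rule_format, of i k] by simp
  qed
next
  assume ?R
  show ?L
  proof (intro allI)
    fix i j
    show "(if i \<in> I then 1 else -1) * (if j \<in> I then 1 else -1) * g i j \<ge> (0::real)"
      using \<open>?R\<close> assms[of i j] by (cases "i \<in> I"; cases "j \<in> I") (simp_all, metis ComplI)
  qed
qed

theorem lemma3:
  fixes e :: "'m::finite \<Rightarrow> real^'m"
  assumes "inj e" and "independent (range e)"
  shows "(\<exists>\<epsilon>\<in>sign_vectors. subdual (gen_cone (\<lambda>i. \<epsilon> i *\<^sub>R e i)))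
     \<longleftrightarrow> (\<exists>I::'m set.
            (\<forall>i\<in>I. \<forall>j\<in>I. inner (e i) (e j) \<ge> 0) \<and>
            (\<forall>k\<in>-I. \<forall>l\<in>-I. inner (e k) (e l) \<ge> 0) \<and>
            (\<forall>i\<in>I. \<forall>k\<in>-I. inner (e i) (e k) \<le> 0))"
proof -
  let ?sign = "\<lambda>I::'m set. \<lambda>i. if i \<in> I then 1 else -1 :: real"
  have "(\<exists>\<epsilon>\<in>sign_vectors. subdual (gen_cone (\<lambda>i. \<epsilon> i *\<^sub>R e i)))
      \<longleftrightarrow> (\<exists>I. subdual (gen_cone (\<lambda>i. ?sign I i *\<^sub>R e i)))"
  proof
    assume "\<exists>\<epsilon>\<in>sign_vectors. subdual (gen_cone (\<lambda>i. \<epsilon> i *\<^sub>R e i))"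
    then obtain \<epsilon> where "\<epsilon> = ?sign {i. \<epsilon> i = 1}" "subdual (gen_cone (\<lambda>i. \<epsilon> i *\<^sub>R e i))"
      using sign_vectors_iff_indicator by blast
    then show "\<exists>I. subdual (gen_cone (\<lambda>i. ?sign I i *\<^sub>R e i))" by metis
  next
    assume "\<exists>I. subdual (gen_cone (\<lambda>i. ?sign I i *\<^sub>R e i))"
    then obtain I where "subdual (gen_cone (\<lambda>i. ?sign I i *\<^sub>R e i))" ..
    moreover have "?sign I \<in> sign_vectors" by (simp add: sign_vectors_def)
    ultimately show "\<exists>\<epsilon>\<in>sign_vectors. subdual (gen_cone (\<lambda>i. \<epsilon> i *\<^sub>R e i))"
      by (intro bexI[of _ "?sign I"])
  qed
  also have "\<dots> \<longleftrightarrow> (\<exists>I::'m set.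
            (\<forall>i\<in>I. \<forall>j\<in>I. inner (e i) (e j) \<ge> 0) \<and>
            (\<forall>k\<in>-I. \<forall>l\<in>-I. inner (e k) (e l) \<ge> 0) \<and>
            (\<forall>i\<in>I. \<forall>k\<in>-I. inner (e i) (e k) \<le> 0))"
    unfolding subdual_signed_gen_cone_iff
    using sign_pattern_nonneg_iff[of "\<lambda>i j. inner (e i) (e j)"] by (simp add: inner_commute)
  finally show ?thesis .
qed

end
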